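(* For all integers $n$ and $\alpha$ with $n\le\alpha\le 2^{n-1}+1$, there exists a minimal $n$-state nondeterministic finite automaton accepting a suffix-closed language whose equivalent minimal deterministic finite automaton has exactly $\alpha$ states.
   Context: NFAs have a single initial state and a transition function $\delta:Q\times\Sigma\to 2^Q$ that may map to the empty set (no sink state is needed or counted); DFAs are complete, so a sink state is counted. A minimal $n$-state NFA is an NFA with $n$ states such that no NFA with fewer states accepts the same language. A language $L\subseteq\Sigma^*$ is suffix-closed if $yz\in L$ implies $z\in L$ for all $y,z\in\Sigma^*$. *)

theory Defs
  imports Main
begin

text \<open>Nondeterministic finite automata over an input alphabet \<open>\<Sigma>\<close>: a finite state set \<open>Q\<close>,
  a single initial state \<open>q0\<close>, a transition function \<open>\<delta> : Q \<times> \<Sigma> \<rightarrow> 2^Q\<close>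
  (possibly empty sets, no sink state counted) and final states \<open>F\<close>.\<close>

definition nfa :: "'a set \<Rightarrow> 's set \<Rightarrow> 's \<Rightarrow> ('s \<Rightarrow> 'a \<Rightarrow> 's set) \<Rightarrow> 's set \<Rightarrow> bool" where
  "nfa \<Sigma> Q q0 \<delta> F \<longleftrightarrow> finite \<Sigma> \<and> finite Q \<and> q0 \<in> Q \<and> F \<subseteq> Q \<and>
     (\<forall>q\<in>Q. \<forall>a\<in>\<Sigma>. \<delta> q a \<subseteq> Q)"

fun nfa_run :: "('s \<Rightarrow> 'a \<Rightarrow> 's set) \<Rightarrow> 's set \<Rightarrow> 'a list \<Rightarrow> 's set" where
  "nfa_run \<delta> S [] = S"
| "nfa_run \<delta> S (a # w) = nfa_run \<delta> (\<Union>q\<in>S. \<delta> q a) w"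

definition nfa_lang :: "'a set \<Rightarrow> 's \<Rightarrow> ('s \<Rightarrow> 'a \<Rightarrow> 's set) \<Rightarrow> 's set \<Rightarrow> 'a list set" where
  "nfa_lang \<Sigma> q0 \<delta> F = {w \<in> lists \<Sigma>. nfa_run \<delta> {q0} w \<inter> F \<noteq> {}}"

text \<open>Complete deterministic finite automata (a sink state, if needed, is part of \<open>Q\<close>).\<close>

definition dfa :: "'a set \<Rightarrow> 's set \<Rightarrow> 's \<Rightarrow> ('s \<Rightarrow> 'a \<Rightarrow> 's) \<Rightarrow> 's set \<Rightarrow> bool" where
  "dfa \<Sigma> Q q0 \<delta> F \<longleftrightarrow> finite \<Sigma> \<and> finite Q \<and> q0 \<in> Q \<and> F \<subseteq> Q \<and>
     (\<forall>q\<in>Q. \<forall>a\<in>\<Sigma>. \<delta> q a \<in> Q)"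

definition dfa_lang :: "'a set \<Rightarrow> 's \<Rightarrow> ('s \<Rightarrow> 'a \<Rightarrow> 's) \<Rightarrow> 's set \<Rightarrow> 'a list set" where
  "dfa_lang \<Sigma> q0 \<delta> F = {w \<in> lists \<Sigma>. foldl \<delta> q0 w \<in> F}"

text \<open>Minimality. States of competing automata range over finite sets of naturals,
  which is no loss of generality (any finite state set can be relabelled).\<close>

definition minimal_nfa :: "'a set \<Rightarrow> nat set \<Rightarrow> nat \<Rightarrow> (nat \<Rightarrow> 'a \<Rightarrow> nat set) \<Rightarrow> nat set \<Rightarrow> bool" where
  "minimal_nfa \<Sigma> Q q0 \<delta> F \<longleftrightarrow> nfa \<Sigma> Q q0 \<delta> F \<and>
     (\<forall>(Q'::nat set) q0' \<delta>' F'. nfa \<Sigma> Q' q0' \<delta>' F' \<and> nfa_lang \<Sigma> q0' \<delta>' F' = nfa_lang \<Sigma> q0 \<delta> F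
        \<longrightarrow> card Q \<le> card Q')"

definition min_dfa_size :: "'a set \<Rightarrow> 'a list set \<Rightarrow> nat \<Rightarrow> bool" where
  "min_dfa_size \<Sigma> L k \<longleftrightarrow>
     (\<exists>(Q::nat set) q0 \<delta> F. dfa \<Sigma> Q q0 \<delta> F \<and> dfa_lang \<Sigma> q0 \<delta> F = L \<and> card Q = k) \<and>
     (\<forall>(Q::nat set) q0 \<delta> F. dfa \<Sigma> Q q0 \<delta> F \<and> dfa_lang \<Sigma> q0 \<delta> F = L \<longrightarrow> k \<le> card Q)"

definition suffix_closed :: "'a list set \<Rightarrow> bool" where
  "suffix_closed L \<longleftrightarrow> (\<forall>y z. y @ z \<in> L \<longrightarrow> z \<in> L)"

end

theory Submission
  imports Defs
begin

text \<open>Take states \<open>0, \<dots>, n-1\<close> with \<open>0\<close> initial and final. Letter \<open>a < n\<close> lets state \<open>a\<close>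
  return to \<open>0\<close> and state \<open>0\<close> spread to all states except \<open>a\<close>; letter \<open>n + i\<close> sends every
  state to a prescribed set \<open>T\<^sub>i \<subseteq> {1..n-1}\<close>. State \<open>0\<close> dominates all other states, so
  the language is suffix-closed, and every reachable subset containing \<open>0\<close> behaves like \<open>{0}\<close>;
  hence the minimal DFA has one state for \<open>0\<close> and one per distinct \<open>T\<^sub>i\<close>. Choosing the
  chain \<open>T\<^sub>i = {1..i+1}\<close> for \<open>i < n-1\<close> yields a fooling set of size \<open>n\<close>, and the remaining
  \<open>T\<^sub>i\<close>, freely chosen among the other subsets of \<open>{1..n-1}\<close>, adjust the DFA size to any
  \<open>\<alpha> \<le> 2\<^sup>n\<^sup>-\<^sup>1 + 1\<close>.\<close>

lemma nfa_run_append: "nfa_run \<delta> S (x @ y) = nfa_run \<delta> (nfa_run \<delta> S x) y"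
  by (induction x arbitrary: S) auto

lemma nfa_run_UN_singleton: "nfa_run \<delta> S w = (\<Union>p\<in>S. nfa_run \<delta> {p} w)"
proof (induction w arbitrary: S)
  case (Cons a w)
  have step: "nfa_run \<delta> {q} (a # w) = (\<Union>p\<in>\<delta> q a. nfa_run \<delta> {p} w)" for q
    using Cons.IH[of "\<delta> q a"] by simp
  have "nfa_run \<delta> S (a # w) = (\<Union>p\<in>(\<Union>q\<in>S. \<delta> q a). nfa_run \<delta> {p} w)"
    using Cons.IH[of "\<Union>q\<in>S. \<delta> q a"] by simp
  also have "\<dots> = (\<Union>q\<in>S. nfa_run \<delta> {q} (a # w))"
    unfolding step by blast
  finally show ?case .
qed simp

lemma nfa_run_mono: "S \<subseteq> S' \<Longrightarrow> nfa_run \<delta> S w \<subseteq> nfa_run \<delta> S' w"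
  unfolding nfa_run_UN_singleton[of \<delta> S w] nfa_run_UN_singleton[of \<delta> S' w] by blast

lemma nfa_run_subset:
  "(\<forall>q\<in>Q. \<forall>a\<in>\<Sigma>. \<delta> q a \<subseteq> Q) \<Longrightarrow> S \<subseteq> Q \<Longrightarrow> w \<in> lists \<Sigma> \<Longrightarrow> nfa_run \<delta> S w \<subseteq> Q"
proof (induction w arbitrary: S)
  case (Cons a w)
  have "\<delta> q a \<subseteq> Q" if "q \<in> S" for q
    using Cons.prems that by auto
  then have "(\<Union>q\<in>S. \<delta> q a) \<subseteq> Q" by blast
  then show ?case using Cons by simp
qed simp

lemma append_in_nfa_lang_iff:
  "x @ y \<in> nfa_lang \<Sigma> q0 \<delta> F \<longleftrightarrow>
     x \<in> lists \<Sigma> \<and> y \<in> lists \<Sigma> \<and> (\<exists>p\<in>nfa_run \<delta> {q0} x. nfa_run \<delta> {p} y \<inter> F \<noteq> {})"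
proof -
  have "x @ y \<in> nfa_lang \<Sigma> q0 \<delta> F \<longleftrightarrow>
          x \<in> lists \<Sigma> \<and> y \<in> lists \<Sigma> \<and> nfa_run \<delta> (nfa_run \<delta> {q0} x) y \<inter> F \<noteq> {}"
    by (simp add: nfa_lang_def nfa_run_append)
  also have "\<dots> \<longleftrightarrow> x \<in> lists \<Sigma> \<and> y \<in> lists \<Sigma> \<and>
                   (\<Union>p\<in>nfa_run \<delta> {q0} x. nfa_run \<delta> {p} y) \<inter> F \<noteq> {}"
    by (simp only: nfa_run_UN_singleton[of \<delta> "nfa_run \<delta> {q0} x" y])
  finally show ?thesis by auto
qed

lemma suffix_closed_nfa_lang_if_initial_dominates:
  assumes "nfa \<Sigma> Q q0 \<delta> F" and "q0 \<in> F"
    and dominates: "\<forall>p\<in>Q. \<forall>a\<in>\<Sigma>. \<delta> p a \<subseteq> \<delta> q0 a"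
  shows "suffix_closed (nfa_lang \<Sigma> q0 \<delta> F)"
  unfolding suffix_closed_def
proof (intro allI impI)
  fix y z assume "y @ z \<in> nfa_lang \<Sigma> q0 \<delta> F"
  then obtain p where y: "y \<in> lists \<Sigma>" and z: "z \<in> lists \<Sigma>"
    and p: "p \<in> nfa_run \<delta> {q0} y" and acc: "nfa_run \<delta> {p} z \<inter> F \<noteq> {}"
    by (auto simp: append_in_nfa_lang_iff)
  have "p \<in> Q"
    using p nfa_run_subset[of Q \<Sigma> \<delta> "{q0}" y] assms(1) y by (auto simp: nfa_def)
  have "nfa_run \<delta> {q0} z \<inter> F \<noteq> {}"
  proof (cases z)
    case Nil
    then show ?thesis using \<open>q0 \<in> F\<close> by simp
  next
    case (Cons a w)
    then have "\<delta> p a \<subseteq> \<delta> q0 a" using dominates \<open>p \<in> Q\<close> z by auto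
    then have "nfa_run \<delta> {p} z \<subseteq> nfa_run \<delta> {q0} z"
      using Cons nfa_run_mono[of "\<delta> p a" "\<delta> q0 a" \<delta> w] by simp
    then show ?thesis using acc by blast
  qed
  then show "z \<in> nfa_lang \<Sigma> q0 \<delta> F" using z by (simp add: nfa_lang_def)
qed

text \<open>Extended fooling sets (Birget): pairwise, at least one of the two crossed words is
  rejected, so accepting runs of different pairs must pass through different states.\<close>

lemma fooling_set_card_le_nfa_states:
  assumes "nfa \<Sigma> Q q0 \<delta> F"
    and accepted: "\<forall>i<k. X i \<in> lists \<Sigma> \<and> Y i \<in> lists \<Sigma> \<and> X i @ Y i \<in> nfa_lang \<Sigma> q0 \<delta> F"
    and fooling: "\<forall>i<k. \<forall>j<k. i \<noteq> j \<longrightarrow>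
                    X i @ Y j \<notin> nfa_lang \<Sigma> q0 \<delta> F \<or> X j @ Y i \<notin> nfa_lang \<Sigma> q0 \<delta> F"
  shows "k \<le> card Q"
proof -
  have "\<exists>p. p \<in> nfa_run \<delta> {q0} (X i) \<and> nfa_run \<delta> {p} (Y i) \<inter> F \<noteq> {}" if "i < k" for i
    using accepted that unfolding append_in_nfa_lang_iff by blast
  then obtain P where P: "\<forall>i<k. P i \<in> nfa_run \<delta> {q0} (X i) \<and> nfa_run \<delta> {P i} (Y i) \<inter> F \<noteq> {}"
    by metis
  have crossed: "X i @ Y j \<in> nfa_lang \<Sigma> q0 \<delta> F" if "i < k" "j < k" "P i = P j" for i j
  proof -
    have "P j \<in> nfa_run \<delta> {q0} (X i)" "nfa_run \<delta> {P j} (Y j) \<inter> F \<noteq> {}"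
      using P that by auto
    moreover have "X i \<in> lists \<Sigma>" "Y j \<in> lists \<Sigma>"
      using accepted that by auto
    ultimately show ?thesis
      unfolding append_in_nfa_lang_iff by blast
  qed
  have "inj_on P {..<k}"
  proof (rule inj_onI, rule ccontr)
    fix i j assume "i \<in> {..<k}" "j \<in> {..<k}" "P i = P j" "i \<noteq> j"
    then show False using crossed[of i j] crossed[of j i] fooling by auto
  qed
  moreover have "P ` {..<k} \<subseteq> Q"
  proof -
    have "nfa_run \<delta> {q0} (X i) \<subseteq> Q" if "i < k" for i
      using nfa_run_subset[of Q \<Sigma> \<delta> "{q0}" "X i"] assms(1) accepted that by (auto simp: nfa_def)
    then show ?thesis using P by blast
  qed
  ultimately show ?thesis
    using card_inj_on_le[of P "{..<k}" Q] assms(1) by (simp add: nfa_def)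
qed

lemma dfa_run_in_states:
  "(\<forall>q\<in>Q. \<forall>a\<in>\<Sigma>. \<delta> q a \<in> Q) \<Longrightarrow> q \<in> Q \<Longrightarrow> w \<in> lists \<Sigma> \<Longrightarrow> foldl \<delta> q w \<in> Q"
  by (induction w arbitrary: q) auto

lemma distinguishable_words_card_le_dfa_states:
  assumes "dfa \<Sigma> Q q0 \<delta> F" and "dfa_lang \<Sigma> q0 \<delta> F = L"
    and words: "\<forall>i<k. W i \<in> lists \<Sigma>"
    and distinguishable: "\<forall>i<k. \<forall>j<k. i \<noteq> j \<longrightarrow> (\<exists>z\<in>lists \<Sigma>. (W i @ z \<in> L) \<noteq> (W j @ z \<in> L))"
  shows "k \<le> card Q"
proof -
  let ?state = "\<lambda>i. foldl \<delta> q0 (W i)"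
  have "inj_on ?state {..<k}"
  proof (rule inj_onI, rule ccontr)
    fix i j assume ij: "i \<in> {..<k}" "j \<in> {..<k}" "?state i = ?state j" "i \<noteq> j"
    then obtain z where "z \<in> lists \<Sigma>" "(W i @ z \<in> L) \<noteq> (W j @ z \<in> L)"
      using distinguishable by blast
    moreover have "W i \<in> lists \<Sigma>" "W j \<in> lists \<Sigma>"
      using ij(1,2) words by auto
    moreover have "W i @ z \<in> L \<longleftrightarrow> W j @ z \<in> L" if "z \<in> lists \<Sigma>" for z
      using that ij(3) calculation(3,4) assms(2) by (auto simp: dfa_lang_def)
    ultimately show False by blast
  qed
  moreover have "?state ` {..<k} \<subseteq> Q"
    using assms(1) words dfa_run_in_states[of Q \<Sigma> \<delta> q0] by (auto simp: dfa_def)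
  ultimately show ?thesis
    using card_inj_on_le[of ?state "{..<k}" Q] assms(1) by (simp add: dfa_def)
qed

locale witness_automata =
  fixes n :: nat and ts :: "nat set list"
  assumes n_pos: "1 \<le> n" and ts_subset: "\<forall>T\<in>set ts. T \<subseteq> {1..<n}"
begin

definition alphabet :: "nat set" where
  "alphabet = {1..<n + length ts}"

definition nfa_step :: "nat \<Rightarrow> nat \<Rightarrow> nat set" where
  "nfa_step p a =
     (if a < n then (if p = 0 then insert 0 ({1..<n} - {a}) else if p = a then {0} else {p})
      else ts ! (a - n))"

text \<open>DFA state \<open>0\<close> stands for every subset containing \<open>0\<close>, state \<open>d > 0\<close> for \<open>ts ! (d - 1)\<close>.\<close>

definition dfa_step :: "nat \<Rightarrow> nat \<Rightarrow> nat" where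
  "dfa_step d a =
     (if a < n then (if d = 0 \<or> a \<in> ts ! (d - 1) then 0 else d)
      else if d \<noteq> 0 \<and> ts ! (d - 1) = {} then d else a - n + 1)"

definition tracks :: "nat \<Rightarrow> nat set \<Rightarrow> bool" where
  "tracks d S \<longleftrightarrow> (d = 0 \<and> 0 \<in> S \<and> S \<subseteq> {0..<n}) \<or> (0 < d \<and> d \<le> length ts \<and> S = ts ! (d - 1))"

abbreviation lang :: "nat list set" where
  "lang \<equiv> nfa_lang alphabet 0 nfa_step {0}"

lemma nth_ts_subset: "i < length ts \<Longrightarrow> ts ! i \<subseteq> {1..<n}"
  using ts_subset by auto

lemma nfa_step_subset:
  assumes "p < n" and "a \<in> alphabet"
  shows "nfa_step p a \<subseteq> {0..<n}"
proof (cases "a < n")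
  case False
  then have "a - n < length ts" using assms(2) by (auto simp: alphabet_def)
  then show ?thesis using False nth_ts_subset[of "a - n"] by (auto simp: nfa_step_def)
qed (use assms(1) in \<open>auto simp: nfa_step_def\<close>)

lemma is_nfa: "nfa alphabet {0..<n} 0 nfa_step {0}"
  using n_pos nfa_step_subset by (auto simp: nfa_def alphabet_def)

lemma is_dfa: "dfa alphabet {0..<length ts + 1} 0 dfa_step {0}"
  by (auto simp: dfa_def alphabet_def dfa_step_def)

lemma tracks_step:
  assumes "tracks d S" and "a \<in> alphabet"
  shows "tracks (dfa_step d a) (\<Union>p\<in>S. nfa_step p a)"
proof (cases "a < n")
  case True
  show ?thesis
  proof (cases "d = 0")
    case True
    then have "0 \<in> S" "S \<subseteq> {0..<n}" using assms(1) by (auto simp: tracks_def)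
    then show ?thesis
      using True \<open>a < n\<close> nfa_step_subset[OF _ assms(2)]
      by (fastforce simp: tracks_def dfa_step_def nfa_step_def)
  next
    case False
    then have "S = ts ! (d - 1)" "d \<le> length ts" using assms(1) by (auto simp: tracks_def)
    moreover have "S \<subseteq> {1..<n}" using calculation False nth_ts_subset[of "d - 1"] by auto
    moreover have "(\<Union>p\<in>S. nfa_step p a) = (if a \<in> S then insert 0 (S - {a}) else S)"
      using calculation(3) \<open>a < n\<close> by (auto simp: nfa_step_def split: if_splits)
    ultimately show ?thesis
      using False \<open>a < n\<close> by (auto simp: tracks_def dfa_step_def)
  qed
next
  case False
  then have "a - n < length ts" using assms(2) by (auto simp: alphabet_def)
  moreover have "(\<Union>p\<in>S. nfa_step p a) = (if S = {} then {} else ts ! (a - n))"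
    using False by (auto simp: nfa_step_def)
  ultimately show ?thesis
    using assms(1) False by (auto simp: tracks_def dfa_step_def)
qed

lemma tracks_run:
  "tracks d S \<Longrightarrow> w \<in> lists alphabet \<Longrightarrow> tracks (foldl dfa_step d w) (nfa_run nfa_step S w)"
  by (induction w arbitrary: d S) (auto simp: tracks_step)

lemma tracks_accepting: "tracks d S \<Longrightarrow> d = 0 \<longleftrightarrow> 0 \<in> S"
  using nth_ts_subset[of "d - 1"] by (fastforce simp: tracks_def)

lemma dfa_lang_eq: "dfa_lang alphabet 0 dfa_step {0} = lang"
proof -
  have "tracks 0 {0}" using n_pos by (simp add: tracks_def)
  then show ?thesis
    using tracks_accepting tracks_run unfolding dfa_lang_def nfa_lang_def by blast
qed

lemma in_lang_iff: "w \<in> lang \<longleftrightarrow> w \<in> lists alphabet \<and> foldl dfa_step 0 w = 0"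
  using dfa_lang_eq by (auto simp: dfa_lang_def)

lemma Nil_in_lang: "[] \<in> lang"
  by (simp add: in_lang_iff)

lemma letter_in_lang: "1 \<le> a \<Longrightarrow> a < n \<Longrightarrow> [a] \<in> lang"
  unfolding in_lang_iff by (auto simp: dfa_step_def alphabet_def)

lemma reset_notin_lang: "i < length ts \<Longrightarrow> [n + i] \<notin> lang"
  by (simp add: in_lang_iff dfa_step_def)

lemma reset_letter_in_lang_iff:
  "i < length ts \<Longrightarrow> 1 \<le> q \<Longrightarrow> q < n \<Longrightarrow> [n + i, q] \<in> lang \<longleftrightarrow> q \<in> ts ! i"
  unfolding in_lang_iff by (auto simp: dfa_step_def alphabet_def)

lemma lang_suffix_closed: "suffix_closed lang"
  using is_nfa by (rule suffix_closed_nfa_lang_if_initial_dominates)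
    (auto simp: nfa_step_def)

text \<open>With \<open>T\<^sub>i = {1..i+1}\<close>, the pairs \<open>([], [])\<close> and \<open>([n+i-1], [i])\<close> for \<open>0 < i < n\<close> form a
  fooling set: \<open>[n+i-1, j]\<close> is accepted iff \<open>j \<le> i\<close>.\<close>

lemma minimal_nfa_if_chain:
  assumes chain: "take (n - 1) ts = map (\<lambda>i. {1..Suc i}) [0..<n - 1]"
  shows "minimal_nfa alphabet {0..<n} 0 nfa_step {0}"
  unfolding minimal_nfa_def
proof (intro conjI is_nfa allI impI)
  fix Q' :: "nat set" and q0' \<delta>' F'
  assume Q': "nfa alphabet Q' q0' \<delta>' F' \<and> nfa_lang alphabet q0' \<delta>' F' = lang"
  have ts_chain: "m < length ts \<and> ts ! m = {1..Suc m}" if "m < n - 1" for m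
  proof -
    have "length (take (n - 1) ts) = n - 1" unfolding chain by simp
    then have "m < length ts" using that by simp
    moreover have "take (n - 1) ts ! m = {1..Suc m}" using that unfolding chain by simp
    ultimately show ?thesis using that nth_take[of m "n - 1" ts] by simp
  qed
  define X where "X i = (case i of 0 \<Rightarrow> [] | Suc m \<Rightarrow> [n + m])" for i
  define Y where "Y i = (if i = 0 then [] else [i])" for i :: nat
  have words: "X i \<in> lists alphabet \<and> Y i \<in> lists alphabet" if "i < n" for i
    using ts_chain that by (cases i) (auto simp: X_def Y_def alphabet_def)
  have crossed: "X i @ Y j \<in> lang \<longleftrightarrow> i = 0 \<or> (0 < j \<and> j \<le> i)" if "i < n" "j < n" for i j
  proof (cases i)
    case 0
    then show ?thesis
      using that Nil_in_lang letter_in_lang[of j] by (auto simp: X_def Y_def)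
  next
    case (Suc m)
    then have "m < length ts" "ts ! m = {1..Suc m}" using ts_chain that by auto
    then show ?thesis
      using Suc that reset_notin_lang[of m] reset_letter_in_lang_iff[of m j] by (auto simp: X_def Y_def)
  qed
  have "n \<le> card Q'"
  proof (rule fooling_set_card_le_nfa_states)
    show "nfa alphabet Q' q0' \<delta>' F'"
      using Q' by simp
    show "\<forall>i<n. X i \<in> lists alphabet \<and> Y i \<in> lists alphabet \<and> X i @ Y i \<in> nfa_lang alphabet q0' \<delta>' F'"
      using words crossed Q' by auto
    show "\<forall>i<n. \<forall>j<n. i \<noteq> j \<longrightarrow>
            X i @ Y j \<notin> nfa_lang alphabet q0' \<delta>' F' \<or> X j @ Y i \<notin> nfa_lang alphabet q0' \<delta>' F'"
      using crossed Q' by auto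
  qed
  then show "card {0..<n} \<le> card Q'" by simp
qed

lemma min_dfa_size_if_distinct:
  assumes "distinct ts"
  shows "min_dfa_size alphabet lang (length ts + 1)"
  unfolding min_dfa_size_def
proof (intro conjI allI impI)
  show "\<exists>(Q::nat set) q0 \<delta> F. dfa alphabet Q q0 \<delta> F \<and> dfa_lang alphabet q0 \<delta> F = lang \<and>
          card Q = length ts + 1"
    using is_dfa dfa_lang_eq by fastforce
  fix Q :: "nat set" and q0 \<delta> F
  assume dfa: "dfa alphabet Q q0 \<delta> F \<and> dfa_lang alphabet q0 \<delta> F = lang"
  define W where "W i = (case i of 0 \<Rightarrow> [] | Suc m \<Rightarrow> [n + m])" for i
  have W_Nil: "W i @ [] \<in> lang \<longleftrightarrow> i = 0" if "i < length ts + 1" for i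
    using that Nil_in_lang reset_notin_lang by (cases i) (auto simp: W_def)
  have W_letter: "W (Suc m) @ [q] \<in> lang \<longleftrightarrow> q \<in> ts ! m" if "m < length ts" "1 \<le> q" "q < n" for m q
    using reset_letter_in_lang_iff that by (simp add: W_def)
  have "\<exists>z\<in>lists alphabet. (W i @ z \<in> lang) \<noteq> (W j @ z \<in> lang)"
    if "i < length ts + 1" "j < length ts + 1" "i \<noteq> j" for i j
  proof (cases "i = 0 \<or> j = 0")
    case True
    then show ?thesis
      using that W_Nil[of i] W_Nil[of j] by (intro bexI[of _ "[]"]) auto
  next
    case False
    then obtain i' j' where ij: "i = Suc i'" "j = Suc j'"
      by (metis not0_implies_Suc)
    then have "ts ! i' \<noteq> ts ! j'"
      using that assms by (simp add: nth_eq_iff_index_eq)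
    then obtain q where q: "(q \<in> ts ! i') \<noteq> (q \<in> ts ! j')" by blast
    then have "1 \<le> q" "q < n"
      using that ij nth_ts_subset[of i'] nth_ts_subset[of j'] by auto
    then show ?thesis
      using q that ij W_letter[of i' q] W_letter[of j' q]
      by (intro bexI[of _ "[q]"]) (auto simp: alphabet_def)
  qed
  then show "length ts + 1 \<le> card Q"
    using dfa n_pos
    by (intro distinguishable_words_card_le_dfa_states[of alphabet Q q0 \<delta> F lang _ W])
      (auto simp: W_def alphabet_def split: nat.split)
qed

end

lemma exists_witness_list:
  assumes "1 \<le> n" "n \<le> \<alpha>" "\<alpha> \<le> 2 ^ (n - 1) + 1"
  obtains ts where "\<forall>T\<in>set ts. T \<subseteq> {1..<n}" "distinct ts"
    "take (n - 1) ts = map (\<lambda>i. {1..Suc i}) [0..<n - 1]" "length ts + 1 = \<alpha>"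
proof -
  define chain where "chain = map (\<lambda>i. {1..Suc i}) [0..<n - 1]"
  have chain_distinct: "distinct chain"
    by (auto simp: chain_def distinct_map inj_on_def)
  have chain_subset: "set chain \<subseteq> Pow {1..<n}"
    by (auto simp: chain_def)
  have "card (Pow {1..<n} - set chain) = 2 ^ (n - 1) - (n - 1)"
    using card_Diff_subset[OF finite_set chain_subset] distinct_card[OF chain_distinct]
    by (simp add: card_Pow chain_def)
  moreover have "n - 1 < 2 ^ (n - 1)" by (rule less_exp)
  ultimately have "\<alpha> - n \<le> card (Pow {1..<n} - set chain)"
    using assms by linarith
  then obtain R where R: "R \<subseteq> Pow {1..<n} - set chain" "card R = \<alpha> - n" "finite R"
    by (rule obtain_subset_with_card_n)
  obtain rs where rs: "set rs = R" "distinct rs"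
    using R(3) finite_distinct_list by blast
  show ?thesis
  proof
    show "\<forall>T\<in>set (chain @ rs). T \<subseteq> {1..<n}" using chain_subset R(1) rs(1) by auto
    show "distinct (chain @ rs)" using chain_distinct rs R(1) by auto
    show "take (n - 1) (chain @ rs) = map (\<lambda>i. {1..Suc i}) [0..<n - 1]" by (simp add: chain_def)
    show "length (chain @ rs) + 1 = \<alpha>"
      using distinct_card[OF rs(2)] rs(1) R(2) assms by (simp add: chain_def)
  qed
qed

theorem mainTheorem8:
  fixes n \<alpha> :: nat
  assumes "1 \<le> n" and "n \<le> \<alpha>" and "\<alpha> \<le> 2 ^ (n - 1) + 1"
  shows "\<exists>(\<Sigma>::nat set) (Q::nat set) q0 \<delta> F.
           minimal_nfa \<Sigma> Q q0 \<delta> F \<and> card Q = n \<and>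
           suffix_closed (nfa_lang \<Sigma> q0 \<delta> F) \<and>
           min_dfa_size \<Sigma> (nfa_lang \<Sigma> q0 \<delta> F) \<alpha>"
proof -
  obtain ts where ts: "\<forall>T\<in>set ts. T \<subseteq> {1..<n}" "distinct ts"
    "take (n - 1) ts = map (\<lambda>i. {1..Suc i}) [0..<n - 1]" "length ts + 1 = \<alpha>"
    using exists_witness_list[OF assms] by blast
  interpret witness_automata n ts
    using assms(1) ts(1) by unfold_locales
  have "minimal_nfa alphabet {0..<n} 0 nfa_step {0} \<and> card {0..<n} = n \<and>
        suffix_closed lang \<and> min_dfa_size alphabet lang \<alpha>"
    using minimal_nfa_if_chain[OF ts(3)] min_dfa_size_if_distinct[OF ts(2)] lang_suffix_closed ts(4)
    by simp
  then show ?thesis by blast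
qed

end
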